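(* Let $p$ be an odd prime, $q=p^m$, and let $k$ be an integer with $0<k<m$. Let $b,c\in\mathbb F_{q^2}^*$ with $\mathrm N(b)=\mathrm N(c)$, let $c_0\in\mathbb F_{q^2}$, let $\ell(x)=(bx^q+cx)^{p^k}-c_0(bx^q+cx)$ and $f(x)=x^{q+1}+\ell(x^2)$. Then $f$ is a planar function on $\mathbb F_{q^2}$ if and only if all of the following hold: (i) $(b^{-1}c)^{\frac{q+1}2}=-1$; (ii) $\omega^{q-1}\ne b^qc^{-1}$ for every $\omega\in\mathbb F_{q^2}^*$ such that $\omega^{p^k-1}=c_0$; (iii) $\omega^{q-1}\ne b^qc^{-1}$ for every $\omega\in\mathbb F_{q^2}^*$ such that $((b^{-1}c^q)^{p^k}-1)\omega^{p^k-1}=b^{-1}c^qc_0^q-c_0$. In particular, if $d=\gcd(p^k-1,q^2-1)$ divides $q-1$ (equivalently, $\gcd(k,2m)$ divides $m$), then conditions (ii) and (iii) are respectively equivalent to (ii') $c_0^{(q-1)/d}\ne(b^qc^{-1})^{(p^k-1)/d}$, and (iii') $(b^{-1}c^qc_0^q-c_0)^{(q-1)/d}\ne((b^{-1}c^q)^{p^k}-1)^{(q-1)/d}(b^qc^{-1})^{(p^k-1)/d}$.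
   Context: $\mathrm N$ denotes the norm from $\mathbb F_{q^2}$ to $\mathbb F_q$, $\mathrm N(u)=u^{q+1}$. A function $f$ on $\mathbb F_{q^n}$ is planar if for every $c\in\mathbb F_{q^n}^*$ the map $x\mapsto f(x+c)-f(x)$ is a permutation of $\mathbb F_{q^n}$. *)

theory Defs
  imports "HOL-Computational_Algebra.Primes"
begin

definition planar :: "('a::field \<Rightarrow> 'a) \<Rightarrow> bool" where
  "planar f \<longleftrightarrow> (\<forall>c. c \<noteq> 0 \<longrightarrow> bij (\<lambda>x. f (x + c) - f x))"

definition normq :: "nat \<Rightarrow> 'a::field \<Rightarrow> 'a" where
  "normq q u = u ^ (q + 1)"

end

(*
  For a \<noteq> 0 the difference map x \<mapsto> f (x + a) - f x is, up to a constant, the additive map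
  x \<mapsto> a x^q + a^q x + \<ell>(2ax), so f is planar iff none of these maps has a nonzero root.
  Substituting u = a^(q-1), which runs through the elements of norm 1, and y = 2ax, planarity
  means Tr(uy) + 2\<ell>(y) \<noteq> 0 whenever N(u) = 1 and y \<noteq> 0, where Tr(z) = z + z^q.

  Write \<ell> = A \<circ> M with M(y) = b y^q + c y and A(z) = z^(p^k) - c0 z.  Roots with M(y) = 0 exist
  iff c/b is the square of an element of norm 1, i.e. iff (c/b)^((q+1)/2) is 1 rather than -1.
  Because N(b) = N(c), M maps onto the line z^q = t z with t = b^q/c, and roots with M(y) = z \<noteq> 0
  exist iff A(z) lies in F_q, which for z^(q-1) = t is the equation of condition (iii).
  Conditions (ii') and (iii') come from the solvability criterion for \<omega>^e1 = x, \<omega>^e2 = s in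
  F_(q^2)^*, proved by counting the fibres of power maps and a Bezout argument.
*)

theory Submission
  imports Defs "HOL-Number_Theory.Residues" "HOL-Computational_Algebra.Polynomial"
begin

lemma card_power_eq_le:
  fixes c :: "'a::idom"
  assumes "0 < n"
  shows "card {x. x ^ n = c} \<le> n"
proof -
  define P where "P = monom (1::'a) n - [:c:]"
  have "coeff P n = 1"
    using assms by (cases n) (auto simp: P_def)
  then have "P \<noteq> 0"
    by auto
  moreover have "degree P \<le> n"
    unfolding P_def by (intro degree_diff_le) (auto simp: degree_monom_le)
  moreover have "{x. x ^ n = c} = {x. poly P x = 0}"
    by (auto simp: P_def poly_monom)
  ultimately show ?thesis
    using card_poly_roots_bound[of P] by simp
qed

lemma power_card_minus_one_eq_1:
  fixes x :: "'a::{field,finite}"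
  assumes "x \<noteq> 0"
  shows "x ^ (card (UNIV :: 'a set) - 1) = 1"
proof -
  have "x * (\<Prod>y\<in>UNIV - {0}. x * y) = x * x ^ (card (UNIV :: 'a set) - 1) * \<Prod>(UNIV - {0})"
    by (simp add: prod.distrib mult_ac)
  moreover have "(\<Prod>y\<in>UNIV - {0}. x * y) = \<Prod>(UNIV - {0})"
    by (rule prod.reindex_bij_witness[of _ "\<lambda>y. y / x" "\<lambda>y. x * y"]) (use assms in auto)
  ultimately show ?thesis
    using assms by simp
qed

lemma power_image_eq_roots_of_unity:
  fixes e f :: nat
  assumes ef: "e * f = card (UNIV :: 'a::{field,finite} set) - 1" and "0 < e" and "0 < f"
  shows "(\<lambda>a. a ^ e) ` (UNIV - {0}) = {v::'a. v ^ f = 1}"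
    and "card {v::'a. v ^ f = 1} = f"
proof -
  define G where "G = (UNIV :: 'a set) - {0}"
  define R where "R = {v::'a. v ^ f = 1}"
  have image_sub: "(\<lambda>a. a ^ e) ` G \<subseteq> R"
    using power_card_minus_one_eq_1 ef by (auto simp: G_def R_def simp flip: power_mult)
  have "e * f = card G"
    using ef by (simp add: G_def card_Diff_singleton)
  also have "card G \<le> card (\<Union>v\<in>(\<lambda>a. a ^ e) ` G. {a. a ^ e = v})"
    by (intro card_mono) auto
  also have "\<dots> \<le> (\<Sum>v\<in>(\<lambda>a. a ^ e) ` G. card {a. a ^ e = v})"
    by (intro card_UN_le) simp
  also have "\<dots> \<le> card ((\<lambda>a. a ^ e) ` G) * e"
    using sum_bounded_above[of "(\<lambda>a. a ^ e) ` G" "\<lambda>v. card {a::'a. a ^ e = v}" e]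
      card_power_eq_le[where 'a='a, OF \<open>0 < e\<close>] by simp
  finally have "f * e \<le> card ((\<lambda>a. a ^ e) ` G) * e"
    by (simp add: mult.commute)
  then have "f \<le> card ((\<lambda>a. a ^ e) ` G)"
    using \<open>0 < e\<close> by simp
  moreover have "card R \<le> f"
    using card_power_eq_le[where 'a='a, OF \<open>0 < f\<close>] by (simp add: R_def)
  moreover have "card ((\<lambda>a. a ^ e) ` G) \<le> card R"
    using image_sub by (simp add: card_mono)
  ultimately have "card ((\<lambda>a. a ^ e) ` G) = card R" and "card R = f"
    by linarith+
  then have "(\<lambda>a. a ^ e) ` G = R"
    using card_subset_eq[OF _ image_sub] by simp
  then show "(\<lambda>a. a ^ e) ` (UNIV - {0}) = {v::'a. v ^ f = 1}" and "card {v::'a. v ^ f = 1} = f"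
    using \<open>card R = f\<close> by (simp_all add: G_def R_def)
qed

lemma exists_power_eq_iff:
  fixes v :: "'a::{field,finite}"
  assumes "e * f = card (UNIV :: 'a set) - 1" and "0 < e" and "0 < f"
  shows "(\<exists>a. a \<noteq> 0 \<and> a ^ e = v) \<longleftrightarrow> v ^ f = 1"
proof -
  have "(\<exists>a. a \<noteq> 0 \<and> a ^ e = v) \<longleftrightarrow> v \<in> (\<lambda>a. a ^ e) ` (UNIV - {0})"
    by blast
  also have "\<dots> \<longleftrightarrow> v ^ f = 1"
    by (simp only: power_image_eq_roots_of_unity(1)[OF assms] mem_Collect_eq)
  finally show ?thesis .
qed

lemma exists_common_root_coprime:
  fixes x s :: "'a::field"
  assumes "coprime m n" and "0 < m" and "x \<noteq> 0" and "s \<noteq> 0" and h: "x ^ n = s ^ m"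
  obtains \<theta> where "\<theta> ^ m = x" and "\<theta> ^ n = s"
proof -
  obtain la mu where bezout: "m * la = n * mu + 1"
    using bezout_nat[of m n] assms(1,2) by auto
  define \<theta> where "\<theta> = x ^ la * inverse (s ^ mu)"
  have pow_\<theta>: "\<theta> ^ j = x ^ (j * la) * inverse (s ^ (j * mu))" for j
    by (simp add: \<theta>_def power_mult_distrib power_inverse power_mult[symmetric] mult.commute)
  have "x ^ (m * la) = x ^ (n * mu) * x"
    by (simp add: bezout power_add)
  moreover have "s ^ (m * mu) = x ^ (n * mu)"
    by (simp only: power_mult h)
  ultimately have "\<theta> ^ m = x"
    using \<open>x \<noteq> 0\<close> by (simp add: pow_\<theta>)
  have "x ^ (n * la) = s ^ (m * la)"
    by (simp only: power_mult h)
  also have "\<dots> = s ^ (n * mu) * s"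
    by (simp add: bezout power_add)
  finally have "\<theta> ^ n = s"
    using \<open>s \<noteq> 0\<close> by (simp add: pow_\<theta>)
  with \<open>\<theta> ^ m = x\<close> show ?thesis
    by (rule that)
qed

lemma gcd_eq_gcd_if_dvd:
  fixes a b n :: nat
  assumes "b dvd n" and "gcd a n dvd b"
  shows "gcd a b = gcd a n"
proof (rule dvd_antisym)
  show "gcd a b dvd gcd a n"
    using assms(1) by (meson gcd_dvd1 gcd_dvd2 gcd_greatest dvd_trans)
  show "gcd a n dvd gcd a b"
    using assms(2) by simp
qed

lemma exists_common_root_iff:
  fixes x s :: "'a::{field,finite}"
  assumes "0 < e1" and e2_r: "e2 * r = card (UNIV :: 'a set) - 1"
    and d_dvd: "gcd e1 (card (UNIV :: 'a set) - 1) dvd e2" and s_root: "s ^ r = 1"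
  defines "d \<equiv> gcd e1 (card (UNIV :: 'a set) - 1)"
  shows "(\<exists>\<omega>. \<omega> \<noteq> 0 \<and> \<omega> ^ e1 = x \<and> \<omega> ^ e2 = s) \<longleftrightarrow> x ^ (e2 div d) = s ^ (e1 div d)"
proof -
  have "d dvd e1" and "d dvd e2"
    using d_dvd by (simp_all add: d_def)
  then obtain e1' e2' where e1': "e1 = d * e1'" and e2': "e2 = d * e2'"
    by (elim dvdE)
  have "0 < d"
    using \<open>0 < e1\<close> by (simp add: d_def)
  have "(0::'a) \<noteq> 1"
    by simp
  then have "2 \<le> card (UNIV :: 'a set)"
    using card_mono[of UNIV "{0, 1::'a}"] by simp
  then have "0 < e2" and "0 < r"
    using e2_r by (auto intro: gr0I)
  then have "0 < e1'" and "0 < e2'"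
    using \<open>0 < e1\<close> e1' e2' by auto
  have "e2 dvd card (UNIV :: 'a set) - 1"
    using e2_r by (metis dvd_triv_left)
  then have "gcd e1 e2 = d"
    unfolding d_def using d_dvd by (rule gcd_eq_gcd_if_dvd)
  then have "d * gcd e1' e2' = d * 1"
    using e1' e2' by (simp add: gcd_mult_distrib_nat)
  then have "coprime e1' e2'"
    using \<open>0 < d\<close> by (simp add: coprime_iff_gcd_eq_1)
  have divs: "e1 div d = e1'" "e2 div d = e2'"
    using \<open>0 < d\<close> e1' e2' by simp_all
  show ?thesis
    unfolding divs
  proof
    assume "\<exists>\<omega>. \<omega> \<noteq> 0 \<and> \<omega> ^ e1 = x \<and> \<omega> ^ e2 = s"
    then obtain \<omega> where "\<omega> ^ e1 = x" "\<omega> ^ e2 = s"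
      by blast
    then have "x ^ e2' = \<omega> ^ (d * e1' * e2')" and "s ^ e1' = \<omega> ^ (d * e2' * e1')"
      by (simp_all add: e1' e2' power_mult)
    then show "x ^ e2' = s ^ e1'"
      by (simp add: mult_ac)
  next
    assume h: "x ^ e2' = s ^ e1'"
    have "s \<noteq> 0"
      using s_root \<open>0 < r\<close> by (auto simp: zero_power)
    then have "x \<noteq> 0"
      using h \<open>0 < e2'\<close> by (auto simp: zero_power)
    obtain \<theta> where \<theta>_e1: "\<theta> ^ e1' = x" and \<theta>_e2: "\<theta> ^ e2' = s"
      using exists_common_root_coprime[OF \<open>coprime e1' e2'\<close> \<open>0 < e1'\<close> \<open>x \<noteq> 0\<close> \<open>s \<noteq> 0\<close> h] .
    have "\<theta> ^ (e2' * r) = 1"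
      using \<theta>_e2 s_root by (simp add: power_mult)
    moreover have "d * (e2' * r) = card (UNIV :: 'a set) - 1"
      using e2_r e2' by (simp add: mult.assoc)
    ultimately obtain \<omega> where "\<omega> \<noteq> 0" "\<omega> ^ d = \<theta>"
      using exists_power_eq_iff[of d "e2' * r" \<theta>] \<open>0 < d\<close> \<open>0 < e2'\<close> \<open>0 < r\<close> by force
    then show "\<exists>\<omega>. \<omega> \<noteq> 0 \<and> \<omega> ^ e1 = x \<and> \<omega> ^ e2 = s"
      using \<theta>_e1 \<theta>_e2 by (auto simp: e1' e2' power_mult)
  qed
qed

lemma gcd_power_add_minus_one:
  fixes p :: nat
  assumes "0 < p"
  shows "gcd (p ^ (i + j) - 1) (p ^ j - 1) = gcd (p ^ i - 1) (p ^ j - 1)"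
proof -
  have "p ^ (i + j) - 1 = p ^ i * (p ^ j - 1) + (p ^ i - 1)"
    using assms by (simp add: power_add diff_mult_distrib2)
  then have "gcd (p ^ (i + j) - 1) (p ^ j - 1) = gcd (p ^ j - 1) (p ^ i * (p ^ j - 1) + (p ^ i - 1))"
    by (simp add: gcd.commute)
  also have "\<dots> = gcd (p ^ j - 1) (p ^ i - 1)"
    by (rule gcd_add_mult)
  finally show ?thesis
    by (simp add: gcd.commute)
qed

lemma gcd_power_minus_one:
  fixes p :: nat
  assumes "0 < p"
  shows "gcd (p ^ a - 1) (p ^ b - 1) = p ^ gcd a b - 1"
proof (induction "a + b" arbitrary: a b rule: less_induct)
  case less
  consider "a = 0" | "b = 0" | "0 < b" "b \<le> a" | "0 < a" "a < b"
    by linarith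
  then show ?case
  proof cases
    case 3
    then have "gcd (p ^ a - 1) (p ^ b - 1) = gcd (p ^ (a - b) - 1) (p ^ b - 1)"
      using gcd_power_add_minus_one[OF assms, of "a - b" b] by simp
    also have "\<dots> = p ^ gcd (a - b) b - 1"
      using 3 by (intro less) auto
    finally show ?thesis
      using 3 by (simp add: gcd_diff1_nat)
  next
    case 4
    then have "gcd (p ^ a - 1) (p ^ b - 1) = gcd (p ^ (b - a) - 1) (p ^ a - 1)"
      using gcd_power_add_minus_one[OF assms, of "b - a" a] by (simp add: gcd.commute)
    also have "\<dots> = p ^ gcd (b - a) a - 1"
      using 4 by (intro less) auto
    also have "gcd (b - a) a = gcd a b"
      using gcd_diff1_nat[of a b] 4 by (simp add: gcd.commute)
    finally show ?thesis .
  qed simp_all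
qed

lemma power_minus_one_dvd_iff:
  fixes p :: nat
  assumes "1 < p"
  shows "p ^ a - 1 dvd p ^ b - 1 \<longleftrightarrow> a dvd b"
proof -
  have "p ^ a - 1 dvd p ^ b - 1 \<longleftrightarrow> gcd (p ^ a - 1) (p ^ b - 1) = p ^ a - 1"
    using gcd_proj1_iff[of "p ^ a - 1" "p ^ b - 1"] by simp
  also have "\<dots> \<longleftrightarrow> p ^ gcd a b - 1 = p ^ a - 1"
    using gcd_power_minus_one[of p a b] assms by simp
  also have "\<dots> \<longleftrightarrow> p ^ gcd a b = p ^ a"
    using assms by (simp add: eq_diff_iff)
  also have "\<dots> \<longleftrightarrow> gcd a b = a"
    using assms by simp
  also have "\<dots> \<longleftrightarrow> a dvd b"
    using gcd_proj1_iff[of a b] by simp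
  finally show ?thesis .
qed

lemma planar_iff_no_kernel:
  fixes f :: "'a::{field,finite} \<Rightarrow> 'a" and D :: "'a \<Rightarrow> 'a \<Rightarrow> 'a"
  assumes D_add: "\<And>a x y. D a (x + y) = D a x + D a y"
    and f_diff: "\<And>a x. f (x + a) - f x = D a x + (f a - f 0)"
  shows "planar f \<longleftrightarrow> (\<forall>a x. a \<noteq> 0 \<longrightarrow> x \<noteq> 0 \<longrightarrow> D a x \<noteq> 0)"
proof -
  have inj_iff: "inj (\<lambda>x. f (x + a) - f x) \<longleftrightarrow> (\<forall>x. x \<noteq> 0 \<longrightarrow> D a x \<noteq> 0)" for a
  proof
    assume inj: "inj (\<lambda>x. f (x + a) - f x)"
    have "D a 0 + D a 0 = D a 0 + 0"
      using D_add[of a 0 0] by simp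
    then have "D a 0 = 0"
      by (simp only: add_left_cancel)
    show "\<forall>x. x \<noteq> 0 \<longrightarrow> D a x \<noteq> 0"
    proof (intro allI impI notI)
      fix x
      assume "x \<noteq> 0" and "D a x = 0"
      then have "f (x + a) - f x = f (0 + a) - f 0"
        using f_diff[where a = a and x = x] f_diff[where a = a and x = 0] \<open>D a 0 = 0\<close> by simp
      then show False
        using injD[OF inj, of x 0] \<open>x \<noteq> 0\<close> by simp
    qed
  next
    assume ker: "\<forall>x. x \<noteq> 0 \<longrightarrow> D a x \<noteq> 0"
    show "inj (\<lambda>x. f (x + a) - f x)"
    proof (rule injI)
      fix x y
      assume "f (x + a) - f x = f (y + a) - f y"
      then have "D a (x - y) + D a y = D a y"
        using f_diff[where a = a and x = x] f_diff[where a = a and x = y] D_add[of a "x - y" y]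
        by simp
      then have "D a (x - y) = 0"
        by simp
      then have "x - y = 0"
        using ker by blast
      then show "x = y"
        by simp
    qed
  qed
  have "bij g \<longleftrightarrow> inj g" for g :: "'a \<Rightarrow> 'a"
    using finite_UNIV_inj_surj[of g] by (auto simp: bij_def)
  then show ?thesis
    by (simp add: planar_def inj_iff)
qed

locale planar_setting =
  fixes p m k q :: nat and b c c0 :: "'a::{field,finite}"
  assumes prime_p: "prime p" and odd_p: "odd p" and q_def: "q = p ^ m"
    and card_UNIV: "card (UNIV :: 'a set) = q ^ 2"
    and k_pos: "0 < k" and k_less_m: "k < m"
    and b_nonzero: "b \<noteq> 0" and c_nonzero: "c \<noteq> 0"
    and norm_b_c: "b ^ (q + 1) = c ^ (q + 1)"
begin

lemma CHAR_eq: "CHAR('a) = p"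
proof -
  have "prime CHAR('a)"
    by (rule prime_CHAR_semidom) (rule finite_imp_CHAR_pos, simp)
  have "card (UNIV :: 'a set) = p ^ (m * 2)"
    using card_UNIV by (simp add: q_def power_mult)
  then have "CHAR('a) dvd p ^ (m * 2)"
    using CHAR_dvd_CARD[where 'a = 'a] by simp
  then have "CHAR('a) dvd p"
    by (rule prime_dvd_power[OF \<open>prime CHAR('a)\<close>])
  then show ?thesis
    by (rule primes_dvd_imp_eq[OF \<open>prime CHAR('a)\<close> prime_p])
qed

lemma power_p_power_add: "(x + y :: 'a) ^ (p ^ j) = x ^ (p ^ j) + y ^ (p ^ j)"
  by (rule freshmans_dream') (simp_all add: CHAR_eq prime_p)

lemma power_p_power_minus: "(- x :: 'a) ^ (p ^ j) = - (x ^ (p ^ j))"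
  using odd_p by (simp add: power_minus_odd)

lemma power_p_power_diff: "(x - y :: 'a) ^ (p ^ j) = x ^ (p ^ j) - y ^ (p ^ j)"
  using power_p_power_add[of x "- y" j] power_p_power_minus[of y j] by simp

lemma two_nonzero: "(2::'a) \<noteq> 0"
proof
  assume "(2::'a) = 0"
  then have "p dvd 2"
    using of_nat_eq_0_iff_char_dvd[of 2, where 'a = 'a] CHAR_eq by simp
  then have "p = 2"
    by (rule primes_dvd_imp_eq[OF prime_p two_is_prime_nat])
  then show False
    using odd_p by simp
qed

lemma q_ge_3: "3 \<le> q"
proof -
  have "2 \<le> p" and "p \<noteq> 2"
    using prime_p odd_p prime_ge_2_nat by auto
  moreover have "p ^ 1 \<le> p ^ m"
    using k_pos k_less_m \<open>2 \<le> p\<close> by (intro power_increasing) auto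
  ultimately show ?thesis
    by (simp add: q_def)
qed

lemma odd_q: "odd q"
  using odd_p by (simp add: q_def)

lemma power_q_add: "(x + y :: 'a) ^ q = x ^ q + y ^ q"
  using power_p_power_add by (simp add: q_def)

lemma power_q_minus: "(- x :: 'a) ^ q = - (x ^ q)"
  using power_p_power_minus by (simp add: q_def)

lemma power_q_diff: "(x - y :: 'a) ^ q = x ^ q - y ^ q"
  using power_p_power_diff by (simp add: q_def)

lemma power_q_two: "(2 :: 'a) ^ q = 2"
  using power_q_add[of 1 1] by (simp add: one_add_one)

lemma card_minus_one: "card (UNIV :: 'a set) - 1 = (q - 1) * (q + 1)"
  using card_UNIV q_ge_3 by (simp add: power2_eq_square algebra_simps)

lemma power_q_power_q: "((x :: 'a) ^ q) ^ q = x"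
proof (cases "x = 0")
  case True
  then show ?thesis
    using q_ge_3 by simp
next
  case False
  have "q * q = Suc (card (UNIV :: 'a set) - 1)"
    using card_UNIV q_ge_3 by (simp add: power2_eq_square)
  then have "(x ^ q) ^ q = x ^ (card (UNIV :: 'a set) - 1) * x"
    by (simp only: power_mult[symmetric] power_Suc2)
  then show ?thesis
    using power_card_minus_one_eq_1[OF False] by simp
qed

lemma power_q_minus_one_mult: "(a :: 'a) ^ (q - 1) * a = a ^ q"
  using q_ge_3 by (simp flip: power_Suc2)

lemma exists_power_q_minus_one_iff: "(\<exists>a. a \<noteq> 0 \<and> a ^ (q - 1) = u) \<longleftrightarrow> u ^ (q + 1) = (1 :: 'a)"
  using exists_power_eq_iff[of "q - 1" "q + 1" u] card_minus_one q_ge_3 by simp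

lemma trace_power_q: "((x :: 'a) + x ^ q) ^ q = x + x ^ q"
  by (simp add: power_q_add power_q_power_q add.commute)

lemma exists_norm_one_trace_nonzero:
  assumes "(x :: 'a) \<noteq> 0"
  obtains u where "u ^ (q + 1) = 1" and "u * x + (u * x) ^ q \<noteq> 0"
proof (cases "x + x ^ q = 0")
  case False
  then show ?thesis
    using that[of 1] by simp
next
  case True
  have card_norm_one: "card {u::'a. u ^ (q + 1) = 1} = q + 1"
    by (rule power_image_eq_roots_of_unity(2)[OF card_minus_one[symmetric]]) (use q_ge_3 in auto)
  have "\<not> {u::'a. u ^ (q + 1) = 1} \<subseteq> {1, -1}"
  proof
    assume "{u::'a. u ^ (q + 1) = 1} \<subseteq> {1, -1}"
    then have "card {u::'a. u ^ (q + 1) = 1} \<le> card {1, -1::'a}"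
      by (intro card_mono) auto
    also have "\<dots> \<le> 2"
      by (simp add: card_insert_le_m1)
    finally show False
      using card_norm_one q_ge_3 by simp
  qed
  then obtain u :: 'a where u: "u ^ (q + 1) = 1" "u \<noteq> 1" "u \<noteq> -1"
    by blast
  have "u - u ^ q \<noteq> 0"
  proof
    assume "u - u ^ q = 0"
    then have "u ^ q = u"
      by simp
    then have "u ^ 2 = 1"
      using u(1) by (simp add: power2_eq_square)
    then show False
      using u by (simp add: power2_eq_1_iff)
  qed
  have "x ^ q = - x"
    using True by (simp add: add_eq_0_iff)
  then have "u * x + (u * x) ^ q = x * (u - u ^ q)"
    by (simp add: power_mult_distrib algebra_simps)
  then show ?thesis
    using that[of u] u(1) assms \<open>u - u ^ q \<noteq> 0\<close> by simp
qed

definition M :: "'a \<Rightarrow> 'a" where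
  "M y = b * y ^ q + c * y"

definition A :: "'a \<Rightarrow> 'a" where
  "A z = z ^ (p ^ k) - c0 * z"

definition ell :: "'a \<Rightarrow> 'a" where
  "ell y = A (M y)"

definition F :: "'a \<Rightarrow> 'a" where
  "F x = x ^ (q + 1) + ell (x ^ 2)"

definition dF :: "'a \<Rightarrow> 'a \<Rightarrow> 'a" where
  "dF a x = a * x ^ q + a ^ q * x + ell (2 * a * x)"

definition t :: 'a where
  "t = b ^ q * inverse c"

lemma M_add: "M (x + y) = M x + M y"
  by (simp add: M_def power_q_add algebra_simps)

lemma M_zero: "M 0 = 0"
  using q_ge_3 by (simp add: M_def)

lemma A_add: "A (x + y) = A x + A y"
  by (simp add: A_def power_p_power_add algebra_simps)

lemma A_zero: "A 0 = 0"
  using prime_gt_0_nat[OF prime_p] by (simp add: A_def)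

lemma ell_add: "ell (x + y) = ell x + ell y"
  by (simp add: ell_def M_add A_add)

lemma F_diff: "F (x + a) - F x = dF a x + (F a - F 0)"
proof -
  have "(x + a) ^ (q + 1) = (x ^ q + a ^ q) * (x + a)"
    by (simp add: power_q_add)
  moreover have "(x + a) ^ 2 = x ^ 2 + (2 * a * x + a ^ 2)"
    by (simp add: power2_eq_square algebra_simps)
  moreover have "F 0 = 0"
    by (simp add: F_def ell_def M_zero A_zero)
  ultimately show ?thesis
    by (simp add: F_def dF_def ell_add algebra_simps)
qed

lemma dF_add: "dF a (x + y) = dF a x + dF a y"
proof -
  have "2 * a * (x + y) = 2 * a * x + 2 * a * y"
    by (simp add: algebra_simps)
  then show ?thesis
    by (simp add: dF_def power_q_add ell_add algebra_simps)
qed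

lemma two_dF_eq:
  "2 * dF a x = a ^ (q - 1) * (2 * a * x) + (a ^ (q - 1) * (2 * a * x)) ^ q + 2 * ell (2 * a * x)"
proof -
  have u: "a ^ (q - 1) * (2 * a * x) = 2 * (a ^ q * x)"
    using power_q_minus_one_mult[of a] by (simp add: algebra_simps)
  have uq: "(2 * (a ^ q * x)) ^ q = 2 * (a * x ^ q)"
    by (simp add: power_mult_distrib power_q_two power_q_power_q)
  show ?thesis
    by (simp only: dF_def u uq) (simp add: algebra_simps)
qed

lemma planar_F_iff:
  "planar F \<longleftrightarrow> \<not> (\<exists>u y. u ^ (q + 1) = 1 \<and> y \<noteq> 0 \<and> u * y + (u * y) ^ q + 2 * ell y = 0)"
proof -
  have "planar F \<longleftrightarrow> (\<forall>a x. a \<noteq> 0 \<longrightarrow> x \<noteq> 0 \<longrightarrow> dF a x \<noteq> 0)"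
    by (rule planar_iff_no_kernel) (simp_all add: dF_add F_diff)
  moreover have "(\<exists>a x. a \<noteq> 0 \<and> x \<noteq> 0 \<and> dF a x = 0)
      \<longleftrightarrow> (\<exists>u y. u ^ (q + 1) = 1 \<and> y \<noteq> 0 \<and> u * y + (u * y) ^ q + 2 * ell y = 0)"
  proof
    assume "\<exists>a x. a \<noteq> 0 \<and> x \<noteq> 0 \<and> dF a x = 0"
    then obtain a x where "a \<noteq> 0" "x \<noteq> 0" "dF a x = 0"
      by blast
    moreover have "(a ^ (q - 1)) ^ (q + 1) = 1"
      using exists_power_q_minus_one_iff \<open>a \<noteq> 0\<close> by blast
    ultimately show "\<exists>u y. u ^ (q + 1) = 1 \<and> y \<noteq> 0 \<and> u * y + (u * y) ^ q + 2 * ell y = 0"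
      using two_dF_eq[of a x] two_nonzero by (intro exI[of _ "a ^ (q - 1)"] exI[of _ "2 * a * x"]) simp
  next
    assume "\<exists>u y. u ^ (q + 1) = 1 \<and> y \<noteq> 0 \<and> u * y + (u * y) ^ q + 2 * ell y = 0"
    then obtain u y where u: "u ^ (q + 1) = 1" and "y \<noteq> 0"
      and eq: "u * y + (u * y) ^ q + 2 * ell y = 0"
      by blast
    then obtain a where "a \<noteq> 0" "a ^ (q - 1) = u"
      using exists_power_q_minus_one_iff by blast
    define x where "x = y / (2 * a)"
    have "2 * a * x = y"
      using \<open>a \<noteq> 0\<close> two_nonzero by (simp add: x_def)
    then have "2 * dF a x = 0"
      using two_dF_eq[of a x] eq \<open>a ^ (q - 1) = u\<close> by simp
    moreover have "x \<noteq> 0"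
      using \<open>a \<noteq> 0\<close> \<open>y \<noteq> 0\<close> two_nonzero by (simp add: x_def)
    ultimately show "\<exists>a x. a \<noteq> 0 \<and> x \<noteq> 0 \<and> dF a x = 0"
      using \<open>a \<noteq> 0\<close> two_nonzero by auto
  qed
  ultimately show ?thesis
    by blast
qed

lemma b_mult_t: "b * t = c ^ q"
proof -
  have "b * b ^ q = c * c ^ q"
    using norm_b_c by simp
  then show ?thesis
    using c_nonzero by (simp add: t_def field_simps)
qed

lemma inverse_b_mult_power_q_c: "inverse b * c ^ q = t"
  using b_mult_t b_nonzero by (simp add: field_simps)

lemma t_norm: "t ^ (q + 1) = 1"
proof -
  have "t ^ q = b * inverse (c ^ q)"
    by (simp add: t_def power_mult_distrib power_inverse power_q_power_q)
  then have "t ^ (q + 1) = (b * t) * inverse (c ^ q)"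
    by (simp add: algebra_simps)
  then show ?thesis
    using b_mult_t c_nonzero by simp
qed

lemma M_power_q: "M y ^ q = t * M y"
proof -
  have "M y ^ q = b ^ q * y + c ^ q * y ^ q"
    by (simp add: M_def power_q_add power_mult_distrib power_q_power_q)
  also have "\<dots> = t * M y"
    using b_mult_t c_nonzero by (simp add: M_def t_def field_simps)
  finally show ?thesis .
qed

lemma M_scale: "s ^ q = s \<Longrightarrow> M (s * y) = s * M y"
  by (simp add: M_def power_mult_distrib algebra_simps)

lemma M_divide: "z ^ q = t * z \<Longrightarrow> M (z / (2 * c)) = z"
  using b_mult_t two_nonzero c_nonzero
  by (simp add: M_def power_divide power_mult_distrib power_q_two field_simps)

lemma norm_inverse_b_mult_c: "(inverse b * c) ^ (q + 1) = 1"
proof -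
  have "(inverse b * c) ^ (q + 1) = inverse (b ^ (q + 1)) * c ^ (q + 1)"
    by (simp only: power_mult_distrib power_inverse)
  also have "\<dots> = inverse (c ^ (q + 1)) * c ^ (q + 1)"
    by (simp only: norm_b_c)
  also have "\<dots> = 1"
    using c_nonzero by (simp del: power_Suc)
  finally show ?thesis .
qed

lemma exists_M_kernel: obtains e where "e \<noteq> 0" and "M e = 0"
proof -
  have "(- (inverse b * c)) ^ (q + 1) = 1"
    using odd_q norm_inverse_b_mult_c by simp
  then obtain e where "e \<noteq> 0" and e: "e ^ (q - 1) = - (inverse b * c)"
    using exists_power_q_minus_one_iff by blast
  have "M e = b * (e ^ (q - 1) * e) + c * e"
    by (simp only: M_def power_q_minus_one_mult)
  then have "M e = 0"
    using e b_nonzero by simp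
  then show ?thesis
    using that \<open>e \<noteq> 0\<close> by blast
qed

lemma q_plus_one_eq_twice_half: "q + 1 = 2 * ((q + 1) div 2)"
  using odd_q by simp

lemma half_norm_cases:
  "(inverse b * c) ^ ((q + 1) div 2) = 1 \<or> (inverse b * c) ^ ((q + 1) div 2) = -1"
proof -
  have "((inverse b * c) ^ ((q + 1) div 2)) ^ 2 = (inverse b * c) ^ (q + 1)"
    by (subst q_plus_one_eq_twice_half) (simp only: power_even_eq)
  also have "\<dots> = 1"
    by (rule norm_inverse_b_mult_c)
  finally show ?thesis
    by (simp add: power2_eq_1_iff)
qed

lemma kernel_solution_imp_half_norm:
  assumes "u ^ (q + 1) = 1" and "y \<noteq> 0" and "M y = 0" and "u * y + (u * y) ^ q = 0"
  shows "(inverse b * c) ^ ((q + 1) div 2) = 1"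
proof -
  have b_y: "b * y ^ q = - (c * y)"
    using assms(3) by (simp add: M_def add_eq_0_iff2)
  have u_y: "u ^ q * y ^ q = - (u * y)"
    using assms(4) by (simp add: power_mult_distrib add_eq_0_iff2)
  have "u ^ q * (b * y ^ q) = b * (u ^ q * y ^ q)"
    by (simp add: algebra_simps)
  then have "(u ^ q * c - b * u) * y = 0"
    by (simp add: b_y u_y algebra_simps)
  then have "u ^ q * c = b * u"
    using assms(2) by simp
  have "u ^ q * u = 1"
    using assms(1) by (simp add: mult.commute)
  then have "c = (u ^ q * u) * c"
    by simp
  also have "\<dots> = u * (u ^ q * c)"
    by (simp only: mult_ac)
  also have "\<dots> = b * u ^ 2"
    by (subst \<open>u ^ q * c = b * u\<close>) (simp add: power2_eq_square mult_ac)
  finally have "inverse b * c = u ^ 2"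
    using b_nonzero by simp
  then show ?thesis
    using assms(1) by (subst (asm) q_plus_one_eq_twice_half) (simp add: power_mult)
qed

lemma kernel_solution_of_half_norm:
  assumes "(inverse b * c) ^ ((q + 1) div 2) = 1"
  obtains u y where "u ^ (q + 1) = 1" and "y \<noteq> 0" and "M y = 0" and "u * y + (u * y) ^ q = 0"
proof -
  have "(2 * (q - 1)) * ((q + 1) div 2) = card (UNIV :: 'a set) - 1"
    by (subst card_minus_one, subst (2) q_plus_one_eq_twice_half) (simp add: mult_ac)
  then obtain a where "a \<noteq> 0" and a: "a ^ (2 * (q - 1)) = inverse b * c"
    using exists_power_eq_iff[of "2 * (q - 1)" "(q + 1) div 2"] assms q_ge_3 by auto
  define u where "u = a ^ (q - 1)"
  have u_sq: "u * u = inverse b * c"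
    using a by (simp add: u_def mult_2 power_add)
  have "u ^ (q + 1) = 1"
    using exists_power_q_minus_one_iff \<open>a \<noteq> 0\<close> u_def by blast
  then have "u ^ q * u = 1"
    by (simp add: mult.commute)
  obtain y where "y \<noteq> 0" and "M y = 0"
    using exists_M_kernel by blast
  have "b * y ^ q = - (c * y)"
    using \<open>M y = 0\<close> by (simp add: M_def add_eq_0_iff2)
  also have "\<dots> = b * (- (u * u * y))"
    using u_sq b_nonzero by (simp add: field_simps)
  finally have "y ^ q = - (u * u * y)"
    by (simp only: mult_left_cancel[OF b_nonzero])
  then have "u * y + (u * y) ^ q = 0"
    using \<open>u ^ q * u = 1\<close> by (simp add: power_mult_distrib algebra_simps)
  then show ?thesis
    using that \<open>u ^ (q + 1) = 1\<close> \<open>y \<noteq> 0\<close> \<open>M y = 0\<close> by blast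
qed

lemma A_power_q:
  assumes "z ^ q = t * z"
  shows "A z ^ q = t ^ (p ^ k) * z ^ (p ^ k) - c0 ^ q * (t * z)"
proof -
  have "(z ^ (p ^ k)) ^ q = (z ^ q) ^ (p ^ k)"
    by (simp flip: power_mult add: mult.commute)
  then show ?thesis
    using assms by (simp add: A_def power_q_diff power_mult_distrib)
qed

lemma A_power_q_eq_iff:
  assumes "z \<noteq> 0" and "z ^ q = t * z"
  shows "A z ^ q = A z \<longleftrightarrow> (t ^ (p ^ k) - 1) * z ^ (p ^ k - 1) = t * c0 ^ q - c0"
proof -
  have "z ^ (p ^ k) = z ^ (p ^ k - 1) * z"
    using prime_gt_0_nat[OF prime_p] by (simp flip: power_Suc2)
  then have "A z ^ q - A z = ((t ^ (p ^ k) - 1) * z ^ (p ^ k - 1) - (t * c0 ^ q - c0)) * z"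
    using A_power_q[OF assms(2)] by (simp add: A_def algebra_simps)
  then show ?thesis
    using assms(1) by (metis eq_iff_diff_eq_0 mult_eq_0_iff)
qed

lemma solution_imp_A_power_q:
  assumes "u * y + (u * y) ^ q + 2 * ell y = 0"
  shows "A (M y) ^ q = A (M y)"
proof -
  have "2 * ell y = - (u * y + (u * y) ^ q)"
    using assms by (simp only: add_eq_0_iff)
  then have "(2 * ell y) ^ q = 2 * ell y"
    by (simp only: power_q_minus trace_power_q)
  then have "2 * ell y ^ q = 2 * ell y"
    by (simp add: power_mult_distrib power_q_two)
  then show ?thesis
    using two_nonzero by (simp add: ell_def)
qed

text \<open>Every \<open>z\<close> with \<open>z\<^sup>q = tz\<close> is a value of \<open>M\<close>, and adding to a preimage an \<open>\<bbbF>\<^sub>q\<close>-multiple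
  of a kernel element \<open>e\<close> shifts \<open>Tr(uy)\<close> by an arbitrary element of \<open>\<bbbF>\<^sub>q\<close>, once \<open>u\<close> is
  chosen with \<open>Tr(ue) \<noteq> 0\<close>.\<close>
lemma solution_of_A_power_q:
  assumes "z \<noteq> 0" and "z ^ q = t * z" and "A z ^ q = A z"
  obtains u y where "u ^ (q + 1) = 1" and "y \<noteq> 0" and "u * y + (u * y) ^ q + 2 * ell y = 0"
proof -
  obtain e where "e \<noteq> 0" and "M e = 0"
    using exists_M_kernel by blast
  obtain u where u: "u ^ (q + 1) = 1" and "u * e + (u * e) ^ q \<noteq> 0"
    using exists_norm_one_trace_nonzero[OF \<open>e \<noteq> 0\<close>] by blast
  define y0 where "y0 = z / (2 * c)"
  define \<tau> where "\<tau> = u * e + (u * e) ^ q"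
  define r where "r = - (2 * A z + (u * y0 + (u * y0) ^ q))"
  define s where "s = r / \<tau>"
  have "(2 * A z) ^ q = 2 * A z"
    by (simp add: power_mult_distrib power_q_two assms(3))
  then have "r ^ q = r"
    by (simp only: r_def power_q_minus power_q_add[of "2 * A z"] trace_power_q)
  then have "s ^ q = s"
    by (simp add: s_def \<tau>_def power_divide trace_power_q)
  define y where "y = y0 + s * e"
  have "M y = z"
    using \<open>s ^ q = s\<close> \<open>M e = 0\<close> by (simp add: y_def M_add M_scale M_divide assms(2) y0_def)
  have "u * y + (u * y) ^ q = (u * y0 + (u * y0) ^ q) + s * \<tau>"
    using \<open>s ^ q = s\<close> by (simp add: y_def \<tau>_def power_q_add power_mult_distrib algebra_simps)
  also have "s * \<tau> = r"
    using \<open>u * e + (u * e) ^ q \<noteq> 0\<close> by (simp add: s_def \<tau>_def)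
  finally have "u * y + (u * y) ^ q + 2 * ell y = 0"
    using \<open>M y = z\<close> by (simp add: ell_def r_def)
  moreover have "y \<noteq> 0"
    using \<open>M y = z\<close> assms(1) M_zero by auto
  ultimately show ?thesis
    using that u by blast
qed

lemma power_q_eq_iff: "(z :: 'a) \<noteq> 0 \<Longrightarrow> z ^ q = t * z \<longleftrightarrow> z ^ (q - 1) = t"
  using power_q_minus_one_mult[of z] by auto

lemma exists_solution_iff:
  "(\<exists>u y. u ^ (q + 1) = 1 \<and> y \<noteq> 0 \<and> u * y + (u * y) ^ q + 2 * ell y = 0)
    \<longleftrightarrow> (inverse b * c) ^ ((q + 1) div 2) = 1 \<or> (\<exists>z. z \<noteq> 0 \<and> z ^ (q - 1) = t \<and> A z ^ q = A z)"
proof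
  assume "\<exists>u y. u ^ (q + 1) = 1 \<and> y \<noteq> 0 \<and> u * y + (u * y) ^ q + 2 * ell y = 0"
  then obtain u y where u: "u ^ (q + 1) = 1" and "y \<noteq> 0"
    and eq: "u * y + (u * y) ^ q + 2 * ell y = 0"
    by blast
  show "(inverse b * c) ^ ((q + 1) div 2) = 1 \<or> (\<exists>z. z \<noteq> 0 \<and> z ^ (q - 1) = t \<and> A z ^ q = A z)"
  proof (cases "M y = 0")
    case True
    then have "u * y + (u * y) ^ q = 0"
      using eq by (simp add: ell_def A_zero)
    then show ?thesis
      using kernel_solution_imp_half_norm[OF u \<open>y \<noteq> 0\<close> True] by blast
  next
    case False
    then show ?thesis
      using M_power_q[of y] power_q_eq_iff solution_imp_A_power_q[OF eq] by blast
  qed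
next
  assume "(inverse b * c) ^ ((q + 1) div 2) = 1 \<or> (\<exists>z. z \<noteq> 0 \<and> z ^ (q - 1) = t \<and> A z ^ q = A z)"
  then show "\<exists>u y. u ^ (q + 1) = 1 \<and> y \<noteq> 0 \<and> u * y + (u * y) ^ q + 2 * ell y = 0"
  proof
    assume "(inverse b * c) ^ ((q + 1) div 2) = 1"
    then obtain u y where "u ^ (q + 1) = 1" "y \<noteq> 0" "M y = 0" "u * y + (u * y) ^ q = 0"
      by (rule kernel_solution_of_half_norm)
    then show ?thesis
      by (intro exI[of _ u] exI[of _ y]) (simp add: ell_def A_zero)
  next
    assume "\<exists>z. z \<noteq> 0 \<and> z ^ (q - 1) = t \<and> A z ^ q = A z"
    then obtain z where "z \<noteq> 0" "z ^ q = t * z" "A z ^ q = A z"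
      using power_q_eq_iff by blast
    then show ?thesis
      by (rule solution_of_A_power_q) blast
  qed
qed

lemma planar_F_iff_conditions:
  "planar F \<longleftrightarrow> (inverse b * c) ^ ((q + 1) div 2) = -1
    \<and> (\<forall>z. z \<noteq> 0 \<and> z ^ (q - 1) = t \<longrightarrow> A z ^ q \<noteq> A z)"
proof -
  have "(1::'a) \<noteq> -1"
    using two_nonzero by (metis one_add_one add.right_inverse)
  then show ?thesis
    using planar_F_iff exists_solution_iff half_norm_cases by metis
qed

text \<open>Condition (ii) is implied by (iii): \<open>\<omega> ^ (p ^ k - 1) = c0\<close> means \<open>A \<omega> = 0\<close>.\<close>
lemma conditions_ii_iii_iff:
  "(\<forall>z. z \<noteq> 0 \<and> z ^ (q - 1) = t \<longrightarrow> A z ^ q \<noteq> A z) \<longleftrightarrow>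
    (\<forall>\<omega>. \<omega> \<noteq> 0 \<and> \<omega> ^ (p ^ k - 1) = c0 \<longrightarrow> \<omega> ^ (q - 1) \<noteq> t) \<and>
    (\<forall>\<omega>. \<omega> \<noteq> 0 \<and> (t ^ (p ^ k) - 1) * \<omega> ^ (p ^ k - 1) = t * c0 ^ q - c0 \<longrightarrow> \<omega> ^ (q - 1) \<noteq> t)"
proof -
  have "A z = 0" if "z ^ (p ^ k - 1) = c0" for z
  proof -
    have "z ^ (p ^ k) = z ^ (p ^ k - 1) * z"
      using prime_gt_0_nat[OF prime_p] by (simp flip: power_Suc2)
    then show ?thesis
      using that by (simp add: A_def)
  qed
  moreover have "0 ^ q = (0 :: 'a)"
    using q_ge_3 by simp
  ultimately show ?thesis
    using A_power_q_eq_iff power_q_eq_iff by metis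
qed

lemma exists_root_power_q_minus_one_eq_t_iff:
  assumes "d = gcd (p ^ k - 1) (q ^ 2 - 1)" and "d dvd q - 1"
  shows "(\<exists>\<omega>. \<omega> \<noteq> 0 \<and> \<omega> ^ (p ^ k - 1) = x \<and> \<omega> ^ (q - 1) = t)
    \<longleftrightarrow> x ^ ((q - 1) div d) = t ^ ((p ^ k - 1) div d)"
proof -
  have d_eq: "d = gcd (p ^ k - 1) (card (UNIV :: 'a set) - 1)"
    using assms(1) card_UNIV by simp
  have "1 < p ^ k"
    by (rule one_less_power[OF prime_gt_1_nat[OF prime_p] k_pos])
  then have "0 < p ^ k - 1"
    by simp
  then show ?thesis
    unfolding d_eq
    by (rule exists_common_root_iff[OF _ card_minus_one[symmetric] _ t_norm])
      (use assms(2) d_eq in simp)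
qed

lemma condition_ii_iff:
  assumes "d = gcd (p ^ k - 1) (q ^ 2 - 1)" and "d dvd q - 1"
  shows "(\<forall>\<omega>. \<omega> \<noteq> 0 \<and> \<omega> ^ (p ^ k - 1) = c0 \<longrightarrow> \<omega> ^ (q - 1) \<noteq> t)
    \<longleftrightarrow> c0 ^ ((q - 1) div d) \<noteq> t ^ ((p ^ k - 1) div d)"
  using exists_root_power_q_minus_one_eq_t_iff[OF assms, of c0] by blast

lemma condition_iii_iff:
  assumes "d = gcd (p ^ k - 1) (q ^ 2 - 1)" and "d dvd q - 1"
  shows "(\<forall>\<omega>. \<omega> \<noteq> 0 \<and> (t ^ (p ^ k) - 1) * \<omega> ^ (p ^ k - 1) = t * c0 ^ q - c0 \<longrightarrow> \<omega> ^ (q - 1) \<noteq> t)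
    \<longleftrightarrow> (t * c0 ^ q - c0) ^ ((q - 1) div d) \<noteq> (t ^ (p ^ k) - 1) ^ ((q - 1) div d) * t ^ ((p ^ k - 1) div d)"
proof (cases "t ^ (p ^ k) - 1 = 0")
  case True
  have "0 < (q - 1) div d"
    using dvd_div_eq_0_iff[OF assms(2)] q_ge_3 by simp
  moreover obtain \<omega>0 where "\<omega>0 \<noteq> 0" "\<omega>0 ^ (q - 1) = t"
    using exists_power_q_minus_one_iff t_norm by blast
  ultimately show ?thesis
    using True by (auto simp: zero_power)
next
  case False
  let ?B = "t * c0 ^ q - c0" and ?C = "t ^ (p ^ k) - 1"
  have "(\<forall>\<omega>. \<omega> \<noteq> 0 \<and> ?C * \<omega> ^ (p ^ k - 1) = ?B \<longrightarrow> \<omega> ^ (q - 1) \<noteq> t)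
      \<longleftrightarrow> \<not> (\<exists>\<omega>. \<omega> \<noteq> 0 \<and> \<omega> ^ (p ^ k - 1) = ?B / ?C \<and> \<omega> ^ (q - 1) = t)"
    using False by (auto simp: field_simps)
  also have "\<dots> \<longleftrightarrow> (?B / ?C) ^ ((q - 1) div d) \<noteq> t ^ ((p ^ k - 1) div d)"
    using exists_root_power_q_minus_one_eq_t_iff[OF assms] by blast
  also have "\<dots> \<longleftrightarrow> ?B ^ ((q - 1) div d) \<noteq> ?C ^ ((q - 1) div d) * t ^ ((p ^ k - 1) div d)"
    using False by (simp add: power_divide field_simps)
  finally show ?thesis .
qed

lemma gcd_dvd_q_minus_one_iff: "gcd (p ^ k - 1) (q ^ 2 - 1) dvd q - 1 \<longleftrightarrow> gcd k (2 * m) dvd m"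
proof -
  have "1 < p"
    using prime_gt_1_nat[OF prime_p] .
  have "q ^ 2 = p ^ (2 * m)" and "q = p ^ m"
    by (simp_all add: q_def power_mult[symmetric] mult.commute)
  then show ?thesis
    using gcd_power_minus_one[of p k "2 * m"] power_minus_one_dvd_iff[OF \<open>1 < p\<close>] \<open>1 < p\<close> by simp
qed

end

theorem theorem2p5:
  fixes p m k q d :: nat and b c c0 :: "'a::{field,finite}" and f :: "'a \<Rightarrow> 'a"
  assumes "prime p" and "odd p"
    and "q = p ^ m"
    and "card (UNIV :: 'a set) = q ^ 2"
    and "0 < k" and "k < m"
    and "b \<noteq> 0" and "c \<noteq> 0"
    and "normq q b = normq q c"
    and "f = (\<lambda>x. x ^ (q + 1) +
               ((b * (x^2) ^ q + c * x^2) ^ (p ^ k) - c0 * (b * (x^2) ^ q + c * x^2)))"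
    and "d = gcd (p ^ k - 1) (q ^ 2 - 1)"
  shows "(planar f \<longleftrightarrow>
            (inverse b * c) ^ ((q + 1) div 2) = -1
          \<and> (\<forall>\<omega>. \<omega> \<noteq> 0 \<and> \<omega> ^ (p ^ k - 1) = c0 \<longrightarrow> \<omega> ^ (q - 1) \<noteq> b ^ q * inverse c)
          \<and> (\<forall>\<omega>. \<omega> \<noteq> 0 \<and> ((inverse b * c ^ q) ^ (p ^ k) - 1) * \<omega> ^ (p ^ k - 1)
                      = inverse b * c ^ q * c0 ^ q - c0
                  \<longrightarrow> \<omega> ^ (q - 1) \<noteq> b ^ q * inverse c))
       \<and> (d dvd (q - 1) \<longleftrightarrow> gcd k (2 * m) dvd m)
       \<and> (d dvd (q - 1) \<longrightarrow>
            ((\<forall>\<omega>. \<omega> \<noteq> 0 \<and> \<omega> ^ (p ^ k - 1) = c0 \<longrightarrow> \<omega> ^ (q - 1) \<noteq> b ^ q * inverse c)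
              \<longleftrightarrow> c0 ^ ((q - 1) div d) \<noteq> (b ^ q * inverse c) ^ ((p ^ k - 1) div d))
          \<and> ((\<forall>\<omega>. \<omega> \<noteq> 0 \<and> ((inverse b * c ^ q) ^ (p ^ k) - 1) * \<omega> ^ (p ^ k - 1)
                      = inverse b * c ^ q * c0 ^ q - c0
                  \<longrightarrow> \<omega> ^ (q - 1) \<noteq> b ^ q * inverse c)
              \<longleftrightarrow> (inverse b * c ^ q * c0 ^ q - c0) ^ ((q - 1) div d)
                  \<noteq> ((inverse b * c ^ q) ^ (p ^ k) - 1) ^ ((q - 1) div d)
                    * (b ^ q * inverse c) ^ ((p ^ k - 1) div d)))"
proof -
  interpret planar_setting p m k q b c c0
    using assms by unfold_locales (simp_all add: normq_def)
  have "f = F"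
    using assms(10) by (simp add: fun_eq_iff F_def ell_def A_def M_def)
  show ?thesis
    unfolding \<open>f = F\<close> inverse_b_mult_power_q_c t_def[symmetric] assms(11)
    using planar_F_iff_conditions conditions_ii_iii_iff gcd_dvd_q_minus_one_iff
      condition_ii_iff[OF refl] condition_iii_iff[OF refl]
    by blast
qed

end
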